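(* Let $n\ge 2$. The fan $F_n$ admits an $(a,d)$-distance antimagic labeling for some integers $a$ and $d\ge 0$ if and only if $n=2$ or $n=4$.
   Context: The fan $F_n$ is obtained from a path $x_1x_2\cdots x_n$ by adding a center vertex $x_0$ adjacent to all of $x_1,\dots,x_n$; it has $n+1$ vertices. For a graph $G=(V,E)$ with $v=|V|$ and a bijection $f:V\to\{1,\dots,v\}$, the vertex-weight of $x$ is $w(x)=\sum_{y\in N(x)}f(y)$ with $N(x)$ the set of neighbours of $x$. For integers $a$ and $d\ge0$, $f$ is an $(a,d)$-distance antimagic labeling if the multiset of vertex-weights equals $\{a,a+d,\dots,a+(v-1)d\}$ (for $d=0$: all weights equal). *)

theory Defs
  imports Main "HOL-Library.Multiset"
begin

text \<open>A finite simple graph is given by a finite vertex set V and a symmetric,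
irreflexive adjacency relation E. The open neighbourhood of x is
N(x) = {y in V. E x y}.\<close>

definition neighbours :: "'a set \<Rightarrow> ('a \<Rightarrow> 'a \<Rightarrow> bool) \<Rightarrow> 'a \<Rightarrow> 'a set" where
  "neighbours V E x = {y \<in> V. E x y}"

definition vertex_weight :: "'a set \<Rightarrow> ('a \<Rightarrow> 'a \<Rightarrow> bool) \<Rightarrow> ('a \<Rightarrow> nat) \<Rightarrow> 'a \<Rightarrow> nat" where
  "vertex_weight V E f x = (\<Sum>y\<in>neighbours V E x. f y)"

definition dist_antimagic ::
  "'a set \<Rightarrow> ('a \<Rightarrow> 'a \<Rightarrow> bool) \<Rightarrow> ('a \<Rightarrow> nat) \<Rightarrow> int \<Rightarrow> int \<Rightarrow> bool" where
  "dist_antimagic V E f a d \<longleftrightarrow>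
     bij_betw f V {1..card V} \<and>
     image_mset (\<lambda>x. int (vertex_weight V E f x)) (mset_set V)
       = image_mset (\<lambda>i. a + int i * d) (mset_set {0..<card V})"

text \<open>The fan F_n: vertices 0..n, center 0, path 1-2-...-n, center adjacent to all of 1..n.\<close>
definition fan_vertices :: "nat \<Rightarrow> nat set" where
  "fan_vertices n = {0..n}"

definition fan_adj :: "nat \<Rightarrow> nat \<Rightarrow> nat \<Rightarrow> bool" where
  "fan_adj n x y \<longleftrightarrow>
     (x = 0 \<and> 1 \<le> y \<and> y \<le> n) \<or> (y = 0 \<and> 1 \<le> x \<and> x \<le> n) \<or>
     (1 \<le> x \<and> x \<le> n \<and> 1 \<le> y \<and> y \<le> n \<and> (y = x + 1 \<or> x = y + 1))"

end

theory Submission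
  imports Defs
begin

text \<open>The center has weight S - f(x_0) with S = (n+1)(n+2)/2, which is quadratic in n, whereas a
path vertex has weight f(x_0) plus at most two further labels, which is linear in n. So for n \<ge> 4
the center outweighs x_1, which forces d > 0 and pairwise distinct weights, and for n \<ge> 5 the
center carries the largest weight a + nd. Comparing the smallest and the second largest weight,
both carried by path vertices, gives d \<le> 2 and n \<le> 5. For n = 5 the identity
f(x_0) = w(x_1) + w(x_5) - w(x_3) contradicts w(x_0) = a + 5d = 21 - f(x_0), by parity when
d = 2 and by size when d = 1.
For n = 3 the end vertices have equal weights, so d = 0, and then f(x_2) = f(x_0).
Explicit labelings exist for n = 2 and n = 4.\<close>

lemma inj_on_if_image_mset_eq:
  assumes "finite A" "finite B" "inj_on g B"
    and "image_mset f (mset_set A) = image_mset g (mset_set B)"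
  shows "inj_on f A"
proof (rule eq_card_imp_inj_on)
  have "f ` A = g ` B"
    using arg_cong[OF assms(4), of set_mset] assms(1,2) by simp
  moreover have "card A = card B"
    using arg_cong[OF assms(4), of size] by simp
  ultimately show "card (f ` A) = card A"
    using card_image[OF assms(3)] by simp
qed (fact assms(1))

lemma dist_antimagic_weight_in_progression:
  assumes "dist_antimagic V E f a d" "finite V" "x \<in> V"
  shows "\<exists>i < card V. int (vertex_weight V E f x) = a + int i * d"
proof -
  have "int (vertex_weight V E f x)
      \<in># image_mset (\<lambda>x. int (vertex_weight V E f x)) (mset_set V)"
    using assms(2,3) by simp
  then show ?thesis
    using assms(1) unfolding dist_antimagic_def by auto
qed

lemma dist_antimagic_progression_attained:
  assumes "dist_antimagic V E f a d" "finite V" "i < card V"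
  shows "\<exists>x\<in>V. int (vertex_weight V E f x) = a + int i * d"
proof -
  have weights: "image_mset (\<lambda>x. int (vertex_weight V E f x)) (mset_set V)
      = image_mset (\<lambda>i. a + int i * d) (mset_set {0..<card V})"
    using assms(1) unfolding dist_antimagic_def by blast
  have "a + int i * d \<in># image_mset (\<lambda>i. a + int i * d) (mset_set {0..<card V})"
    using assms(3) by force
  then have "a + int i * d \<in># image_mset (\<lambda>x. int (vertex_weight V E f x)) (mset_set V)"
    by (simp only: weights)
  then show ?thesis
    using assms(2) by auto
qed

lemma dist_antimagic_inj_weight:
  assumes "dist_antimagic V E f a d" "finite V" "d \<noteq> 0"
  shows "inj_on (vertex_weight V E f) V"
proof -
  have progression_inj: "inj_on (\<lambda>i. a + int i * d) {0..<card V}"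
    using assms(3) by (auto simp: inj_on_def)
  then have "inj_on (\<lambda>x. int (vertex_weight V E f x)) V"
    using inj_on_if_image_mset_eq[OF assms(2) finite_atLeastLessThan progression_inj] assms(1)
    unfolding dist_antimagic_def by blast
  then show ?thesis
    by (auto simp: inj_on_def)
qed

lemma vertex_weight_fan_center:
  "vertex_weight {0..n} (fan_adj n) f 0 = (\<Sum>i=1..n. f i)"
proof -
  have "neighbours {0..n} (fan_adj n) 0 = {1..n}"
    by (auto simp: neighbours_def fan_adj_def)
  then show ?thesis
    unfolding vertex_weight_def by simp
qed

lemma vertex_weight_fan_path:
  assumes "1 \<le> x" "x \<le> n"
  shows "vertex_weight {0..n} (fan_adj n) f x
       = f 0 + (if 1 < x then f (x - 1) else 0) + (if x < n then f (x + 1) else 0)"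
proof -
  have N: "neighbours {0..n} (fan_adj n) x
      = insert 0 ((if 1 < x then {x - 1} else {}) \<union> (if x < n then {x + 1} else {}))"
    using assms by (auto simp: neighbours_def fan_adj_def)
  show ?thesis
    unfolding vertex_weight_def N using assms by (cases "1 < x"; cases "x < n") auto
qed

lemma finite_fan_vertices: "finite (fan_vertices n)"
  by (simp add: fan_vertices_def)

lemma card_fan_vertices: "card (fan_vertices n) = n + 1"
  by (simp add: fan_vertices_def)

locale fan_labelling =
  fixes n :: nat and f :: "nat \<Rightarrow> nat"
  assumes n_ge_2: "2 \<le> n" and bij: "bij_betw f {0..n} {1..n + 1}"
begin

definition weight :: "nat \<Rightarrow> int" where
  "weight x = int (vertex_weight {0..n} (fan_adj n) f x)"

lemma label_range: "x \<le> n \<Longrightarrow> 1 \<le> f x \<and> f x \<le> n + 1"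
  using bij_betw_apply[OF bij, of x] by auto

lemma label_inj: "x \<le> n \<Longrightarrow> y \<le> n \<Longrightarrow> f x = f y \<Longrightarrow> x = y"
  using bij unfolding bij_betw_def inj_on_def by auto

lemma center_weight: "2 * (weight 0 + int (f 0)) = (int n + 1) * (int n + 2)"
proof -
  have "(\<Sum>i=0..n. f i) = (\<Sum>j=1..n + 1. j)"
    using sum.reindex_bij_betw[OF bij, of "\<lambda>j. j"] by simp
  then have "2 * (\<Sum>i=0..n. f i) = (n + 1) * (n + 2)"
    using double_gauss_sum_from_Suc_0[of "n + 1", where ?'a = nat] by simp
  moreover have "(\<Sum>i=0..n. f i) = f 0 + (\<Sum>i=1..n. f i)"
    by (simp add: sum.atLeast_Suc_atMost)
  ultimately have "2 * (vertex_weight {0..n} (fan_adj n) f 0 + f 0) = (n + 1) * (n + 2)"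
    unfolding vertex_weight_fan_center by simp
  then have "int (2 * (vertex_weight {0..n} (fan_adj n) f 0 + f 0)) = int ((n + 1) * (n + 2))"
    by (rule arg_cong)
  then show ?thesis
    unfolding weight_def by (simp add: algebra_simps)
qed

lemma path_weight:
  "1 \<le> x \<Longrightarrow> x \<le> n \<Longrightarrow> weight x = int (f 0)
     + (if 1 < x then int (f (x - 1)) else 0) + (if x < n then int (f (x + 1)) else 0)"
  unfolding weight_def by (simp add: vertex_weight_fan_path)

lemma path_weight_bounds:
  assumes "1 \<le> x" "x \<le> n"
  shows "int (f 0) < weight x" "weight x \<le> int (f 0) + 2 * int n + 1"
    "weight x + int (f 0) \<le> 4 * int n + 1"
proof -
  have left_le: "x - 1 \<le> n" using assms by simp
  have "int (f 0) < weight x \<and> weight x \<le> int (f 0) + 2 * int n + 1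
      \<and> weight x + int (f 0) \<le> 4 * int n + 1"
  proof (cases "1 < x")
    case left: True
    have "f (x - 1) \<noteq> f 0" using label_inj[of "x - 1" 0] left assms by force
    show ?thesis
    proof (cases "x < n")
      case True
      have "f (x + 1) \<noteq> f 0" "f (x + 1) \<noteq> f (x - 1)"
        using label_inj[of "x + 1" 0] label_inj[of "x + 1" "x - 1"] True left by force+
      then show ?thesis
        using path_weight[OF assms] label_range[of 0] label_range[OF left_le]
          label_range[of "x + 1"]
          \<open>f (x - 1) \<noteq> f 0\<close> left True assms by auto
    next
      case False
      then show ?thesis
        using path_weight[OF assms] label_range[of 0] label_range[OF left_le]
          \<open>f (x - 1) \<noteq> f 0\<close> left assms by auto
    qed
  next
    case False
    then have "x < n" using assms n_ge_2 by linarith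
    have "f (x + 1) \<noteq> f 0" using label_inj[of "x + 1" 0] \<open>x < n\<close> by force
    then show ?thesis
      using path_weight[OF assms] label_range[of 0] label_range[of "x + 1"] False \<open>x < n\<close> assms
      by auto
  qed
  then show "int (f 0) < weight x" "weight x \<le> int (f 0) + 2 * int n + 1"
    "weight x + int (f 0) \<le> 4 * int n + 1"
    by auto
qed

lemma first_weight_lt_center:
  assumes "4 \<le> n"
  shows "weight 1 < weight 0"
proof -
  have w1: "weight 1 = int (f 0) + int (f 2)"
    using path_weight[of 1] assms by (simp add: numeral_2_eq_2)
  have "f 2 \<noteq> f 0"
    using label_inj[of 2 0] assms by auto
  then have "int (f 0) + int (f 2) \<le> 2 * int n + 1"
    using label_range[of 0] label_range[of 2] assms by linarith
  moreover have "int (f 0) \<le> int n + 1"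
    using label_range[of 0] by simp
  moreover have "4 * int n \<le> int n * int n"
    using assms by (intro mult_right_mono) auto
  moreover have "2 * weight 0 + 2 * int (f 0) = int n * int n + 3 * int n + 2"
    using center_weight by (simp add: algebra_simps)
  ultimately show ?thesis
    using w1 assms by linarith
qed

lemma path_weight_le_center:
  assumes "5 \<le> n" "1 \<le> x" "x \<le> n"
  shows "weight x \<le> weight 0"
proof -
  have "5 * int n \<le> int n * int n"
    using assms by (intro mult_right_mono) auto
  moreover have "2 * weight 0 + 2 * int (f 0) = int n * int n + 3 * int n + 2"
    using center_weight by (simp add: algebra_simps)
  ultimately show ?thesis
    using path_weight_bounds(3)[OF assms(2,3)] by linarith
qed

end

locale fan_antimagic =
  fixes n :: nat and f :: "nat \<Rightarrow> nat" and a d :: int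
  assumes n_ge_3: "3 \<le> n" and d_nonneg: "0 \<le> d"
    and antimagic: "dist_antimagic (fan_vertices n) (fan_adj n) f a d"
begin

sublocale fan_labelling n f
proof
  show "2 \<le> n" using n_ge_3 by simp
  show "bij_betw f {0..n} {1..n + 1}"
    using antimagic unfolding dist_antimagic_def card_fan_vertices by (simp add: fan_vertices_def)
qed

lemma weight_in_progression:
  assumes "x \<le> n"
  shows "\<exists>i\<le>n. weight x = a + int i * d"
proof -
  have "x \<in> fan_vertices n" using assms by (simp add: fan_vertices_def)
  then obtain i where i: "i < card (fan_vertices n)"
      "int (vertex_weight (fan_vertices n) (fan_adj n) f x) = a + int i * d"
    using dist_antimagic_weight_in_progression[OF antimagic finite_fan_vertices] by blast
  then show ?thesis
    unfolding card_fan_vertices weight_def fan_vertices_def by (auto intro!: exI[of _ i])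
qed

lemma progression_attained:
  assumes "i \<le> n"
  shows "\<exists>x\<le>n. weight x = a + int i * d"
proof -
  have "i < card (fan_vertices n)" using assms by (simp add: card_fan_vertices)
  then obtain x where x: "x \<in> fan_vertices n"
      "int (vertex_weight (fan_vertices n) (fan_adj n) f x) = a + int i * d"
    using dist_antimagic_progression_attained[OF antimagic finite_fan_vertices] by blast
  then show ?thesis
    unfolding weight_def fan_vertices_def by auto
qed

lemma weight_inj:
  assumes "0 < d" "x \<le> n" "y \<le> n" "weight x = weight y"
  shows "x = y"
proof -
  have "inj_on (vertex_weight {0..n} (fan_adj n) f) {0..n}"
    using dist_antimagic_inj_weight[OF antimagic finite_fan_vertices] assms(1)
    by (simp add: fan_vertices_def)
  then show ?thesis
    using assms(2-4) unfolding weight_def inj_on_def by simp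
qed

lemma d_pos:
  assumes "4 \<le> n"
  shows "0 < d"
proof (rule ccontr)
  assume "\<not> 0 < d"
  then have "d = 0" using d_nonneg by simp
  then have "weight 0 = weight 1"
    using weight_in_progression[of 0] weight_in_progression[of 1] assms by auto
  then show False
    using first_weight_lt_center[OF assms] by simp
qed

lemma n_ne_3: "n \<noteq> 3"
proof
  assume n: "n = 3"
  have "{1..n} = {1, 2, 3}" using n by auto
  then have w0: "weight 0 = int (f 1) + int (f 2) + int (f 3)"
    unfolding weight_def vertex_weight_fan_center by simp
  have w1: "weight 1 = int (f 0) + int (f 2)" and w2: "weight 2 = int (f 0) + int (f 1) + int (f 3)"
    and w3: "weight 3 = int (f 0) + int (f 2)"
    using path_weight[of 1] path_weight[of 2] path_weight[of 3] n by (simp_all add: numeral_eq_Suc)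
  show False
  proof (cases "d = 0")
    case True
    then have "weight 0 = a" "weight 1 = a" "weight 2 = a"
      using weight_in_progression[of 0] weight_in_progression[of 1] weight_in_progression[of 2] n
      by fastforce+
    then have "f 2 = f 0"
      using w0 w1 w2 by linarith
    then show False
      using label_inj[of 2 0] n by simp
  next
    case False
    then show False
      using weight_inj[of 1 3] d_nonneg w1 w3 n by simp
  qed
qed

lemma path_weight_lt_center:
  assumes "5 \<le> n" "1 \<le> x" "x \<le> n"
  shows "weight x < weight 0"
  using path_weight_le_center[OF assms] weight_inj[of x 0] d_pos assms by force

lemma center_weight_top:
  assumes "5 \<le> n"
  shows "weight 0 = a + int n * d"
proof -
  obtain x where x: "x \<le> n" "weight x = a + int n * d"
    using progression_attained by blast
  obtain j where j: "j \<le> n" "weight 0 = a + int j * d"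
    using weight_in_progression by blast
  have "int j * d \<le> int n * d"
    using j(1) d_nonneg by (intro mult_right_mono) auto
  then have "x = 0"
    using path_weight_lt_center[OF assms, of x] x j by fastforce
  then show ?thesis
    using x by simp
qed

lemma progression_below_top_on_path:
  assumes "5 \<le> n" "i < n"
  obtains x where "1 \<le> x" "x \<le> n" "weight x = a + int i * d"
proof -
  obtain x where x: "x \<le> n" "weight x = a + int i * d"
    using progression_attained[of i] assms(2) by auto
  have "int i * d < int n * d"
    using assms d_pos by (intro mult_strict_right_mono) auto
  then have "weight x < weight 0"
    using x center_weight_top[OF assms(1)] by linarith
  then have "x \<noteq> 0"
    by (rule contrapos_pn) simp
  then show ?thesis
    using that[of x] x by simp
qed

lemma d_le_2:
  assumes "5 \<le> n"
  shows "d \<le> 2"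
proof -
  obtain x where x: "1 \<le> x" "x \<le> n" "weight x = a"
    using progression_below_top_on_path[OF assms, of 0] assms by auto
  obtain y where y: "1 \<le> y" "y \<le> n" "weight y = a + int (n - 1) * d"
    using progression_below_top_on_path[OF assms, of "n - 1"] assms by auto
  have "(int n - 1) * d \<le> 2 * int n"
    using path_weight_bounds(1)[OF x(1,2)] path_weight_bounds(2)[OF y(1,2)] x(3) y(3) assms
    by (simp add: of_nat_diff algebra_simps)
  show ?thesis
  proof (rule ccontr)
    assume "\<not> d \<le> 2"
    then have "(int n - 1) * 3 \<le> (int n - 1) * d"
      using assms by (intro mult_left_mono) auto
    then have "3 * int n - 3 \<le> 2 * int n"
      using \<open>(int n - 1) * d \<le> 2 * int n\<close> by (simp add: algebra_simps)
    then show False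
      using assms by linarith
  qed
qed

lemma n_le_5:
  assumes "5 \<le> n"
  shows "n \<le> 5"
proof (rule ccontr)
  assume "\<not> n \<le> 5"
  then have "6 * int n \<le> int n * int n"
    by (intro mult_right_mono) auto
  obtain y where y: "1 \<le> y" "y \<le> n" "weight y = a + int (n - 1) * d"
    using progression_below_top_on_path[OF assms, of "n - 1"] assms by auto
  then have "weight 0 = weight y + d"
    using center_weight_top[OF assms] assms by (simp add: of_nat_diff algebra_simps)
  then show False
    using center_weight path_weight_bounds(3)[OF y(1,2)] d_le_2[OF assms]
      \<open>6 * int n \<le> int n * int n\<close> assms
    by (simp add: algebra_simps)
qed

lemma n_ne_5: "n \<noteq> 5"
proof
  assume n: "n = 5"
  have top: "weight 0 = a + 5 * d"
    using center_weight_top n by simp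
  have "int (f 0) = weight 1 + weight 5 - weight 3"
    using path_weight[of 1] path_weight[of 3] path_weight[of 5] n by (simp add: numeral_2_eq_2)
  moreover obtain i1 i3 i5 where i: "weight 1 = a + int i1 * d" "weight 3 = a + int i3 * d"
      "weight 5 = a + int i5 * d"
    using weight_in_progression[of 1] weight_in_progression[of 3] weight_in_progression[of 5] n
    by auto
  ultimately have parity: "2 * int (f 0) = 21 + (int i1 + int i5 - int i3 - 5) * d"
    using center_weight top n by (simp add: algebra_simps)
  have "i1 \<noteq> i5"
    using weight_inj[of 1 5] i d_pos n by auto
  then have "1 \<le> i1 + i5" by presburger
  have "i3 < 5"
    using path_weight_lt_center[of 3] i(2) top d_pos n by auto
  have "f 0 \<le> 6"
    using label_range[of 0] n by simp
  have "d = 1 \<or> d = 2"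
    using d_pos d_le_2 n by auto
  then show False
  proof
    assume "d = 1"
    then show False
      using parity \<open>1 \<le> i1 + i5\<close> \<open>i3 < 5\<close> \<open>f 0 \<le> 6\<close> by simp
  next
    assume "d = 2"
    then have "2 * int (f 0) = 11 + 2 * (int i1 + int i5 - int i3)"
      using parity by simp
    then show False by presburger
  qed
qed

theorem n_eq_4: "n = 4"
  using n_ne_3 n_ne_5 n_le_5 n_ge_3 by linarith

end

lemma fan_2_dist_antimagic: "dist_antimagic (fan_vertices 2) (fan_adj 2) (\<lambda>i. i + 1) 3 1"
proof -
  let ?f = "\<lambda>i::nat. i + 1"
  have v: "{0..2::nat} = {0, 1, 2}" "{0..<3::nat} = {0, 1, 2}" by auto
  have ms: "mset_set {0..2::nat} = {#0, 1, 2#}" "mset_set {0..<3::nat} = {#0, 1, 2#}"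
    unfolding v by simp_all
  have "vertex_weight {0..2} (fan_adj 2) ?f 0 = 5"
    unfolding vertex_weight_fan_center by (simp add: numeral_eq_Suc)
  moreover have "vertex_weight {0..2} (fan_adj 2) ?f 1 = 4"
    using vertex_weight_fan_path[of 1 2 ?f] by simp
  moreover have "vertex_weight {0..2} (fan_adj 2) ?f 2 = 3"
    using vertex_weight_fan_path[of 2 2 ?f] by simp
  moreover have "bij_betw ?f {0..2} {1..3}"
    unfolding bij_betw_def inj_on_def by (auto simp: v(1) image_iff)
  ultimately show ?thesis
    unfolding dist_antimagic_def fan_vertices_def by (simp add: ms)
qed

lemma fan_4_dist_antimagic:
  "dist_antimagic (fan_vertices 4) (fan_adj 4) (\<lambda>i. if i = 0 then 5 else i) 7 1"
proof -
  let ?f = "\<lambda>i::nat. if i = 0 then 5 else i"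
  have v: "{0..4::nat} = {0, 1, 2, 3, 4}" "{0..<5::nat} = {0, 1, 2, 3, 4}" by auto
  have ms: "mset_set {0..4::nat} = {#0, 1, 2, 3, 4#}" "mset_set {0..<5::nat} = {#0, 1, 2, 3, 4#}"
    unfolding v by simp_all
  have "vertex_weight {0..4} (fan_adj 4) ?f 0 = 10"
    unfolding vertex_weight_fan_center by (simp add: numeral_eq_Suc)
  moreover have "vertex_weight {0..4} (fan_adj 4) ?f 1 = 7"
    using vertex_weight_fan_path[of 1 4 ?f] by simp
  moreover have "vertex_weight {0..4} (fan_adj 4) ?f 2 = 9"
    using vertex_weight_fan_path[of 2 4 ?f] by simp
  moreover have "vertex_weight {0..4} (fan_adj 4) ?f 3 = 11"
    using vertex_weight_fan_path[of 3 4 ?f] by simp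
  moreover have "vertex_weight {0..4} (fan_adj 4) ?f 4 = 8"
    using vertex_weight_fan_path[of 4 4 ?f] by simp
  moreover have "bij_betw ?f {0..4} {1..5}"
    unfolding bij_betw_def inj_on_def v(1) by (auto simp: image_iff)
  ultimately show ?thesis
    unfolding dist_antimagic_def fan_vertices_def by (simp add: ms)
qed

theorem mainTheorem13:
  fixes n :: nat
  assumes "n \<ge> 2"
  shows "(\<exists>f a d. d \<ge> 0 \<and> dist_antimagic (fan_vertices n) (fan_adj n) f a d)
         \<longleftrightarrow> (n = 2 \<or> n = 4)"
proof
  assume "\<exists>f a d. d \<ge> 0 \<and> dist_antimagic (fan_vertices n) (fan_adj n) f a d"
  then obtain f a d where "0 \<le> d" "dist_antimagic (fan_vertices n) (fan_adj n) f a d"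
    by blast
  then have "3 \<le> n \<Longrightarrow> n = 4"
    by (intro fan_antimagic.n_eq_4[of n f a d] fan_antimagic.intro)
  then show "n = 2 \<or> n = 4"
    using assms by linarith
next
  assume "n = 2 \<or> n = 4"
  then show "\<exists>f a d. d \<ge> 0 \<and> dist_antimagic (fan_vertices n) (fan_adj n) f a d"
    using fan_2_dist_antimagic fan_4_dist_antimagic by (metis zero_le_one)
qed

end
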